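(* Let $n\ge 1$ and let $B^n=\{x\in\mathbb{R}^n : \|x\|\le 1\}$ be the closed unit ball. There is no decomposition of $B^n$ into sets of diameter less than $2/\sqrt{n}$ such that at most $n$ of the sets meet at any point.
   Context: A decomposition of a space $X$ is a locally finite collection (for compact $X$, a finite collection) of closed subsets of $X$ (the pieces) with pairwise disjoint interiors whose union is $X$. Diameters are Euclidean. *)

theory Defs
  imports "HOL-Analysis.Analysis"
begin

definition decomposition :: "'a::topological_space set \<Rightarrow> 'a set set \<Rightarrow> bool" where
  "decomposition X D \<longleftrightarrow>
     finite D \<and>
     (\<forall>A\<in>D. closedin (top_of_set X) A) \<and>
     (\<forall>A\<in>D. \<forall>B\<in>D. A \<noteq> B \<longrightarrow>
        ((top_of_set X) interior_of A) \<inter> ((top_of_set X) interior_of B) = {}) \<and>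
     \<Union>D = X"

end

theory Submission
  imports Defs
begin

text \<open>The cube \<open>[-a, a]\<^sup>n\<close> with \<open>a = 1 / sqrt n\<close> is inscribed in the ball, and a set of
  diameter less than \<open>2 a\<close> cannot meet two opposite faces of it. So it suffices to prove
  Lebesgue's covering theorem: a finite closed cover of the cube none of whose members meets
  two opposite faces has a point lying in \<open>n + 1\<close> members. If not, by compactness even the
  \<open>\<delta>\<close>-neighbourhoods of the members have order at most \<open>n\<close> for small \<open>\<delta>\<close>. A partition of
  unity subordinate to these neighbourhoods, sending each member to a vertex of the cube on the
  side of the faces it approaches, is a continuous self-map of the cube preserving every face,
  hence onto by Brouwer's fixed point theorem. But its image lies in finitely many convex hulls
  of at most \<open>n\<close> points, which are null sets.\<close>

lemma decomposition_piece_closed_subset: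
  assumes "decomposition X D" "closed X" "A \<in> D"
  shows "closed A" "A \<subseteq> X"
proof -
  have "closedin (top_of_set X) A"
    using assms(1,3) by (simp add: decomposition_def)
  then show "closed A" "A \<subseteq> X"
    by (metis closedin_closed_trans assms(2),
        metis closedin_imp_subset topspace_euclidean_subtopology)
qed

lemma negligible_convex_hull_card_le:
  fixes P :: "'a::euclidean_space set"
  assumes "finite P" "card P \<le> DIM('a)"
  shows "negligible (convex hull P)"
proof -
  have "interior (convex hull P) \<subseteq> interior (affine hull P)"
    by (intro interior_mono convex_hull_subset_affine_hull)
  then have "interior (convex hull P) = {}"
    using empty_interior_affine_hull[OF assms] by blast
  then show ?thesis
    using negligible_convex_interior[OF convex_convex_hull] by blast
qed

lemma negligible_UN_convex_hull_card_le:
  fixes v :: "'b \<Rightarrow> 'a::euclidean_space"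
  assumes "finite D"
  shows "negligible (\<Union>S\<in>{S. S \<subseteq> D \<and> card S \<le> DIM('a)}. convex hull (v ` S))"
proof (intro negligible_Union ballI)
  show "finite ((\<lambda>S. convex hull (v ` S)) ` {S. S \<subseteq> D \<and> card S \<le> DIM('a)})"
    using assms by simp
next
  fix H assume "H \<in> (\<lambda>S. convex hull (v ` S)) ` {S. S \<subseteq> D \<and> card S \<le> DIM('a)}"
  then obtain S where "S \<subseteq> D" "card S \<le> DIM('a)" "H = convex hull (v ` S)"
    by blast
  moreover have "finite S"
    using \<open>S \<subseteq> D\<close> assms finite_subset by blast
  ultimately show "negligible H"
    using card_image_le[of S v] by (simp add: negligible_convex_hull_card_le)
qed

lemma convex_hull_inner_eq:
  assumes "y \<in> convex hull P" "\<forall>p\<in>P. b \<bullet> p = c"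
  shows "b \<bullet> y = c"
proof -
  have "convex hull P \<subseteq> {z. b \<bullet> z = c}"
    using assms(2) by (intro hull_minimal convex_hyperplane) auto
  then show ?thesis using assms(1) by blast
qed

lemma infdist_less_iff:
  assumes "A \<noteq> {}"
  shows "infdist x A < e \<longleftrightarrow> (\<exists>y\<in>A. dist x y < e)"
  using assms by (simp add: infdist_notempty cINF_less_iff)

lemma nerve_map_exists:
  fixes D :: "'a::metric_space set set" and v :: "'a set \<Rightarrow> 'b::real_normed_vector"
  assumes "finite D" "S \<subseteq> \<Union>D" "\<delta> > 0"
  obtains f where "continuous_on S f"
    and "\<And>x. x \<in> S \<Longrightarrow> f x \<in> convex hull (v ` {A\<in>D. infdist x A < \<delta>})"
proof
  define w where "w A x = max 0 (\<delta> - infdist x A)" for A and x :: 'a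
  define f where "f x = (\<Sum>A\<in>D. (w A x / sum (\<lambda>A. w A x) D) *\<^sub>R v A)" for x
  have w_nonneg: "0 \<le> w A x" for A x
    unfolding w_def by simp
  have w_pos: "0 < sum (\<lambda>A. w A x) D" if "x \<in> S" for x
  proof -
    obtain A where "A \<in> D" "x \<in> A" using assms(2) \<open>x \<in> S\<close> by blast
    then have "0 < w A x" using assms(3) unfolding w_def by simp
    then show ?thesis using \<open>A \<in> D\<close> assms(1) w_nonneg by (intro sum_pos2) auto
  qed
  show "continuous_on S f"
    unfolding f_def using w_pos unfolding w_def
    by (intro continuous_intros) (metis less_irrefl)
  fix x assume "x \<in> S"
  let ?T = "{A\<in>D. infdist x A < \<delta>}"
  have sums_on_T: "f x = (\<Sum>A\<in>?T. (w A x / sum (\<lambda>A. w A x) D) *\<^sub>R v A)"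
    "sum (\<lambda>A. w A x) D = sum (\<lambda>A. w A x) ?T"
    unfolding f_def by (rule sum.mono_neutral_right; auto simp: assms(1) w_def)+
  have "(\<Sum>A\<in>?T. w A x / sum (\<lambda>A. w A x) D) = 1"
    using w_pos[OF \<open>x \<in> S\<close>] by (simp add: sum_divide_distrib[symmetric] sums_on_T(2))
  then show "f x \<in> convex hull (v ` ?T)"
    unfolding sums_on_T(1) using assms(1) w_pos[OF \<open>x \<in> S\<close>]
    by (intro convex_sum convex_convex_hull) (auto simp: w_nonneg hull_inc)
qed

lemma cbox_subset_image_face_preserving:
  fixes f :: "real^'n \<Rightarrow> real^'n"
  assumes contf: "continuous_on (cbox l u) f"
    and lower: "\<And>x i. x \<in> cbox l u \<Longrightarrow> x$i = l$i \<Longrightarrow> f x $ i = l$i"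
    and upper: "\<And>x i. x \<in> cbox l u \<Longrightarrow> x$i = u$i \<Longrightarrow> f x $ i = u$i"
  shows "cbox l u \<subseteq> f ` cbox l u"
proof
  fix p assume p: "p \<in> cbox l u"
  \<comment> \<open>a fixed point of \<open>g\<close> is a preimage of \<open>p\<close>, because faces are preserved\<close>
  define g where "g y = (\<chi> i. max (l$i) (min (u$i) (y$i - f y$i + p$i)))" for y
  have "continuous_on (cbox l u) g"
    unfolding g_def by (intro continuous_intros contf)
  moreover have "g \<in> cbox l u \<rightarrow> cbox l u"
    using p unfolding g_def by (fastforce simp: mem_box_cart intro: order_trans)
  ultimately obtain x where x: "x \<in> cbox l u" "g x = x"
    using brouwer[of "cbox l u" g] p by (metis compact_cbox convex_box(1) empty_iff)
  have "f x $ i = p $ i" for i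
  proof -
    have fixed: "max (l$i) (min (u$i) (x$i - f x$i + p$i)) = x$i"
      using arg_cong[OF x(2), of "\<lambda>y. y $ i"] by (simp add: g_def)
    have "l$i \<le> x$i" "x$i \<le> u$i"
      using x(1) by (auto simp: mem_box_cart)
    then consider "x$i = l$i" | "x$i = u$i" | "l$i < x$i \<and> x$i < u$i"
      by linarith
    then show ?thesis
      using fixed p lower[OF x(1)] upper[OF x(1)] by cases (auto simp: mem_box_cart)
  qed
  then show "p \<in> f ` cbox l u"
    using x(1) by (metis image_eqI vec_eq_iff)
qed

lemma face_preserving_image_not_negligible:
  fixes f :: "real^'n \<Rightarrow> real^'n"
  assumes "box l u \<noteq> {}" "continuous_on (cbox l u) f"
    and "\<And>x i. x \<in> cbox l u \<Longrightarrow> x$i = l$i \<Longrightarrow> f x $ i = l$i"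
    and "\<And>x i. x \<in> cbox l u \<Longrightarrow> x$i = u$i \<Longrightarrow> f x $ i = u$i"
  shows "\<not> negligible (f ` cbox l u)"
  using cbox_subset_image_face_preserving[OF assms(2-4)] negligible_subset
    negligible_interval(1) assms(1) by blast

lemma lebesgue_covering_cbox:
  fixes D :: "(real^'n) set set"
  assumes "box l u \<noteq> {}" "finite D" "{} \<notin> D" "cbox l u \<subseteq> \<Union>D" "\<delta> > 0"
    and no_opposite_faces: "\<And>A i y z. A \<in> D \<Longrightarrow> y \<in> A \<Longrightarrow> z \<in> A \<Longrightarrow>
        \<not> (y$i < l$i + \<delta> \<and> u$i - \<delta> < z$i)"
  shows "\<exists>x\<in>cbox l u. CARD('n) < card {A\<in>D. infdist x A < \<delta>}"
proof (rule ccontr)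
  assume "\<not> ?thesis"
  then have order: "card {A\<in>D. infdist x A < \<delta>} \<le> CARD('n)" if "x \<in> cbox l u" for x
    using that by (simp add: not_less)
  define T where "T x = {A\<in>D. infdist x A < \<delta>}" for x
  define v :: "(real^'n) set \<Rightarrow> real^'n"
    where "v A = (\<chi> i. if \<exists>y\<in>A. y$i < l$i + \<delta> then l$i else u$i)" for A
  obtain f where contf: "continuous_on (cbox l u) f"
    and f_hull: "\<And>x. x \<in> cbox l u \<Longrightarrow> f x \<in> convex hull (v ` T x)"
    using nerve_map_exists[OF assms(2,4,5), of v] unfolding T_def by blast
  have near: "\<exists>y\<in>A. \<bar>x$i - y$i\<bar> < \<delta>" if A: "A \<in> T x" for A x i
  proof -
    obtain y where "y \<in> A" "dist x y < \<delta>"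
      using A assms(3) infdist_less_iff[of A x \<delta>] by (auto simp: T_def)
    then show ?thesis
      using dist_vec_nth_le[of x i y] unfolding dist_real_def by force
  qed
  have f_component: "f x $ i = c" if "x \<in> cbox l u" "\<And>A. A \<in> T x \<Longrightarrow> v A $ i = c" for x i c
    using convex_hull_inner_eq[OF f_hull[OF that(1)], of "axis i 1" c] that(2)
    by (auto simp: inner_axis')
  have "f x $ i = l$i" if x: "x \<in> cbox l u" and face: "x$i = l$i" for x i
  proof (rule f_component[OF x])
    fix A assume "A \<in> T x"
    then obtain y where "y \<in> A" "y$i < l$i + \<delta>"
      using near[OF \<open>A \<in> T x\<close>, of i] face by (force simp: abs_less_iff)
    then show "v A $ i = l$i"
      by (auto simp: v_def)
  qed
  moreover have "f x $ i = u$i" if x: "x \<in> cbox l u" and face: "x$i = u$i" for x i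
  proof (rule f_component[OF x])
    fix A assume "A \<in> T x"
    then obtain z where "z \<in> A" "u$i - \<delta> < z$i"
      using near[OF \<open>A \<in> T x\<close>, of i] face by (force simp: abs_less_iff)
    then show "v A $ i = u$i"
      using no_opposite_faces \<open>A \<in> T x\<close> by (auto simp: v_def T_def)
  qed
  ultimately have "\<not> negligible (f ` cbox l u)"
    using assms(1) contf by (intro face_preserving_image_not_negligible)
  moreover have "f ` cbox l u \<subseteq> (\<Union>S\<in>{S. S \<subseteq> D \<and> card S \<le> DIM(real^'n)}. convex hull (v ` S))"
  proof (rule image_subsetI)
    fix x assume "x \<in> cbox l u"
    then show "f x \<in> (\<Union>S\<in>{S. S \<subseteq> D \<and> card S \<le> DIM(real^'n)}. convex hull (v ` S))"
      using order f_hull by (intro UN_I[of "T x"]) (auto simp: T_def)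
  qed
  ultimately show False
    using negligible_subset negligible_UN_convex_hull_card_le[OF assms(2)] by blast
qed

lemma eventually_at_right_infdist_ge:
  fixes K :: "'a::metric_space set"
  assumes "compact K" "finite S" "S \<noteq> {}" "\<And>A. A \<in> S \<Longrightarrow> closed A \<and> A \<noteq> {}"
    and avoids: "\<And>x. x \<in> K \<Longrightarrow> \<exists>A\<in>S. x \<notin> A"
  shows "\<forall>\<^sub>F \<delta> in at_right 0. \<forall>x\<in>K. \<exists>A\<in>S. \<delta> \<le> infdist x A"
proof (cases "K = {}")
  case False
  define h where "h x = (\<Sum>A\<in>S. infdist x A)" for x
  have "continuous_on K h"
    unfolding h_def by (intro continuous_intros)
  then obtain x0 where "x0 \<in> K" and h_min: "\<And>x. x \<in> K \<Longrightarrow> h x0 \<le> h x"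
    using continuous_attains_inf[OF assms(1) False] by blast
  obtain A0 where "A0 \<in> S" "x0 \<notin> A0"
    using avoids[OF \<open>x0 \<in> K\<close>] by blast
  then have "0 < infdist x0 A0"
    using assms(4) in_closed_iff_infdist_zero[of A0 x0] infdist_nonneg[of x0 A0] by auto
  then have "0 < h x0"
    unfolding h_def using \<open>A0 \<in> S\<close> assms(2) by (intro sum_pos2) (auto simp: infdist_nonneg)
  have "\<exists>A\<in>S. \<delta> \<le> infdist x A" if x: "x \<in> K" and \<delta>: "\<delta> < h x0 / card S" for x \<delta>
  proof (rule ccontr)
    assume "\<not> ?thesis"
    then have "infdist x A < h x0 / card S" if "A \<in> S" for A
      using that \<delta> by force
    then have "h x < (\<Sum>A\<in>S. h x0 / card S)"
      unfolding h_def using assms(2,3) by (intro sum_strict_mono) auto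
    also have "\<dots> = h x0"
      using assms(2,3) by simp
    finally show False
      using h_min[OF x] by simp
  qed
  moreover have "0 < h x0 / card S"
    using \<open>0 < h x0\<close> assms(2,3) by (simp add: card_gt_0_iff)
  ultimately show ?thesis
    unfolding eventually_at_right_field by blast
qed simp

lemma eventually_at_right_infdist_order_le:
  fixes K :: "'a::metric_space set"
  assumes "compact K" "finite D" "\<And>A. A \<in> D \<Longrightarrow> closed A \<and> A \<noteq> {}"
    and order: "\<And>x. x \<in> K \<Longrightarrow> card {A\<in>D. x \<in> A} \<le> k"
  shows "\<forall>\<^sub>F \<delta> in at_right 0. \<forall>x\<in>K. card {A\<in>D. infdist x A < \<delta>} \<le> k"
proof -
  let ?\<S> = "{S. S \<subseteq> D \<and> card S = Suc k}"
  have "\<forall>\<^sub>F \<delta> in at_right 0. \<forall>x\<in>K. \<exists>A\<in>S. \<delta> \<le> infdist x A" if S: "S \<in> ?\<S>" for S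
  proof (rule eventually_at_right_infdist_ge)
    show "finite S" "S \<noteq> {}"
      using S assms(2) finite_subset by fastforce+
    show "\<exists>A\<in>S. x \<notin> A" if "x \<in> K" for x
    proof (rule ccontr)
      assume "\<not> ?thesis"
      then have "card S \<le> card {A\<in>D. x \<in> A}"
        using S assms(2) by (intro card_mono) auto
      then show False
        using order[OF \<open>x \<in> K\<close>] S by simp
    qed
  qed (use S assms(1,3) in auto)
  then have "\<forall>\<^sub>F \<delta> in at_right 0. \<forall>S\<in>?\<S>. \<forall>x\<in>K. \<exists>A\<in>S. \<delta> \<le> infdist x A"
    using assms(2) by (intro eventually_ball_finite) auto
  then show ?thesis
  proof (rule eventually_mono)
    fix \<delta> assume far: "\<forall>S\<in>?\<S>. \<forall>x\<in>K. \<exists>A\<in>S. \<delta> \<le> infdist x A"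
    show "\<forall>x\<in>K. card {A\<in>D. infdist x A < \<delta>} \<le> k"
    proof (intro ballI leI notI)
      fix x assume "x \<in> K" "k < card {A\<in>D. infdist x A < \<delta>}"
      then obtain S where S: "S \<subseteq> {A\<in>D. infdist x A < \<delta>}" "card S = Suc k"
        by (meson Suc_leI obtain_subset_with_card_n)
      then obtain A where "A \<in> S" "\<delta> \<le> infdist x A"
        using far \<open>x \<in> K\<close> by blast
      then show False
        using S(1) by auto
    qed
  qed
qed

lemma component_diff_le_diameter:
  fixes A :: "(real^'n) set"
  assumes "bounded A" "y \<in> A" "z \<in> A"
  shows "z$i - y$i \<le> diameter A"
proof -
  have "z$i - y$i \<le> dist z y"
    using dist_vec_nth_le[of z i y] by (simp add: dist_real_def)
  also have "\<dots> \<le> diameter A"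
    by (rule diameter_bounded_bound[OF assms(1,3,2)])
  finally show ?thesis .
qed

lemma lebesgue_covering_cube:
  fixes D :: "(real^'n) set set"
  assumes "0 < a" "finite D" "cbox (\<chi> i. -a) (\<chi> i. a) \<subseteq> \<Union>D"
    and pieces: "\<And>A. A \<in> D \<Longrightarrow> closed A \<and> bounded A \<and> diameter A < 2 * a"
  shows "\<exists>x\<in>cbox (\<chi> i. -a) (\<chi> i. a). CARD('n) < card {A\<in>D. x \<in> A}"
proof (rule ccontr)
  define C where "C = cbox (\<chi> i::'n. -a) (\<chi> i. a)"
  define D' where "D' = D - {{}}"
  assume "\<not> ?thesis"
  moreover have "{A\<in>D'. x \<in> A} = {A\<in>D. x \<in> A}" for x
    by (auto simp: D'_def)
  ultimately have "card {A\<in>D'. x \<in> A} \<le> CARD('n)" if "x \<in> C" for x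
    using that by (simp add: C_def not_less)
  then have small_order: "\<forall>\<^sub>F \<delta> in at_right 0. \<forall>x\<in>C. card {A\<in>D'. infdist x A < \<delta>} \<le> CARD('n)"
    using assms(2) pieces by (intro eventually_at_right_infdist_order_le) (auto simp: C_def D'_def)
  have small_diameter: "\<forall>\<^sub>F \<delta> in at_right 0. \<forall>A\<in>D'. diameter A < 2 * a - 2 * \<delta>"
  proof (intro eventually_ball_finite ballI)
    fix A assume "A \<in> D'"
    have "((\<lambda>\<delta>. 2 * a - 2 * \<delta>) \<longlongrightarrow> 2 * a) (at_right 0)"
      by (intro tendsto_eq_intros) auto
    then show "\<forall>\<^sub>F \<delta> in at_right 0. diameter A < 2 * a - 2 * \<delta>"
      using pieces \<open>A \<in> D'\<close> by (intro order_tendstoD(1)) (auto simp: D'_def)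
  qed (use assms(2) in \<open>simp add: D'_def\<close>)
  have "\<forall>\<^sub>F \<delta> in at_right 0. 0 < \<delta> \<and>
      (\<forall>x\<in>C. card {A\<in>D'. infdist x A < \<delta>} \<le> CARD('n)) \<and>
      (\<forall>A\<in>D'. diameter A < 2 * a - 2 * \<delta>)"
    using eventually_at_right_less small_order small_diameter by eventually_elim blast
  then obtain \<delta> where "0 < \<delta>"
    and order_\<delta>: "\<forall>x\<in>C. card {A\<in>D'. infdist x A < \<delta>} \<le> CARD('n)"
    and diameter_\<delta>: "\<forall>A\<in>D'. diameter A < 2 * a - 2 * \<delta>"
    using eventually_happens'[OF trivial_limit_at_right_real] by blast
  have no_opposite_faces: "\<not> (y$i < (\<chi> i. -a)$i + \<delta> \<and> (\<chi> i. a)$i - \<delta> < z$i)"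
    if "A \<in> D'" "y \<in> A" "z \<in> A" for A y z i
    using component_diff_le_diameter[of A y z i] diameter_\<delta> pieces that by (force simp: D'_def)
  have "0 \<in> box (\<chi> i::'n. -a) (\<chi> i. a)"
    using assms(1) by (simp add: mem_box_cart)
  then have "\<exists>x\<in>C. CARD('n) < card {A\<in>D'. infdist x A < \<delta>}"
    unfolding C_def using assms(2,3) \<open>0 < \<delta>\<close> no_opposite_faces
    by (intro lebesgue_covering_cbox) (auto simp: D'_def)
  then show False
    using order_\<delta> by (auto simp: not_le)
qed

lemma cube_subset_cball:
  assumes "0 \<le> a"
  shows "cbox (\<chi> i::'n::finite. -a) (\<chi> i. a) \<subseteq> cball 0 (sqrt CARD('n) * a)"
proof
  fix x :: "real^'n" assume "x \<in> cbox (\<chi> i. -a) (\<chi> i. a)"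
  then have "\<bar>x$i\<bar> \<le> a" for i
    by (simp add: mem_box_cart abs_le_iff minus_le_iff)
  then have "norm x \<le> norm (\<chi> i::'n. a)"
    using assms by (intro norm_le_componentwise_cart) simp
  also have "\<dots> = sqrt CARD('n) * a"
    using assms by (simp add: norm_vec_def L2_set_constant)
  finally show "x \<in> cball 0 (sqrt CARD('n) * a)"
    by simp
qed

theorem corollary1p4:
  "\<not> (\<exists>D. decomposition (cball (0::real^'n) 1) D \<and>
         (\<forall>A\<in>D. diameter A < 2 / sqrt (real CARD('n))) \<and>
         (\<forall>x\<in>cball (0::real^'n) 1. card {A\<in>D. x \<in> A} \<le> CARD('n)))"
proof (intro notI, elim exE conjE)
  fix D assume dec: "decomposition (cball (0::real^'n) 1) D"
    and diam: "\<forall>A\<in>D. diameter A < 2 / sqrt (real CARD('n))"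
    and order: "\<forall>x\<in>cball (0::real^'n) 1. card {A\<in>D. x \<in> A} \<le> CARD('n)"
  define a where "a = 1 / sqrt CARD('n)"
  have "0 < a"
    by (simp add: a_def)
  have cube: "cbox (\<chi> i::'n. -a) (\<chi> i. a) \<subseteq> cball 0 1"
    using cube_subset_cball[where 'n='n, of a] \<open>0 < a\<close> by (simp add: a_def)
  have pieces: "closed A \<and> bounded A \<and> diameter A < 2 * a" if "A \<in> D" for A
    using decomposition_piece_closed_subset[OF dec closed_cball that] diam that
      bounded_subset[OF bounded_cball] by (auto simp: a_def)
  have "finite D" "cbox (\<chi> i. -a) (\<chi> i. a) \<subseteq> \<Union>D"
    using dec cube by (auto simp: decomposition_def)
  then obtain x where "x \<in> cbox (\<chi> i. -a) (\<chi> i. a)" "CARD('n) < card {A\<in>D. x \<in> A}"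
    using lebesgue_covering_cube[OF \<open>0 < a\<close> _ _ pieces] by blast
  then show False
    using order cube by force
qed

end
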